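(* Let $n\ge1$ and let $\bar F:\mathbb{R}^n\to[0,\infty)$ be a Finsler norm. Write $\|\vec v\|=\bar F(\vec v)$ and $\bar g_{\vec v}(\vec v,\vec w)=\frac12\frac{\partial^2\bar F^2}{\partial v^\alpha\partial v^\beta}(\vec v)\,v^\alpha w^\beta$ for $\vec v\ne0$, with $\bar g_{\vec 0}(\vec 0,\vec w):=0$. Then for all $v^0,w^0>0$ and all $\vec v,\vec w\in\mathbb{R}^n$ with $(v^0)^2-\|\vec v\|^2>0$ and $(w^0)^2-\|\vec w\|^2>0$, $$\big[v^0w^0-\bar g_{\vec v}(\vec v,\vec w)\big]^2-\big[(v^0)^2-\|\vec v\|^2\big]\big[(w^0)^2-\|\vec w\|^2\big]\ge0.$$
   Context: A Finsler norm on $\mathbb{R}^n$ is a function $\bar F:\mathbb{R}^n\to[0,\infty)$ that is smooth on $\mathbb{R}^n\setminus\{0\}$, continuous at $0$, positively homogeneous of degree 1 ($\bar F(\lambda x)=\lambda\bar F(x)$ for $\lambda>0$), and such that for every $x\neq0$ the matrix $\frac12\frac{\partial^2\bar F^2}{\partial x^\alpha\partial x^\beta}(x)$ is positive definite. Greek indices run over $1,\dots,n$, with summation over repeated indices. *)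

theory Defs
  imports "HOL-Analysis.Analysis"
begin

definition pderiv_at :: "('n::finite) \<Rightarrow> (real^'n \<Rightarrow> real) \<Rightarrow> real^'n \<Rightarrow> real" where
  "pderiv_at i f x = frechet_derivative f (at x) (axis i 1)"

fun Ck_on :: "nat \<Rightarrow> (real^'n::finite) set \<Rightarrow> (real^'n \<Rightarrow> real) \<Rightarrow> bool" where
  "Ck_on 0 S f = continuous_on S f"
| "Ck_on (Suc k) S f = ((\<forall>x\<in>S. f differentiable (at x)) \<and> continuous_on S f \<and>
      (\<forall>i. Ck_on k S (\<lambda>x. pderiv_at i f x)))"

definition smooth_on :: "(real^'n::finite) set \<Rightarrow> (real^'n \<Rightarrow> real) \<Rightarrow> bool" where
  "smooth_on S f = (\<forall>k. Ck_on k S f)"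

definition fund_tensor :: "(real^'n::finite \<Rightarrow> real) \<Rightarrow> real^'n \<Rightarrow> 'n \<Rightarrow> 'n \<Rightarrow> real" where
  "fund_tensor F x \<alpha> \<beta> = (1/2) * pderiv_at \<beta> (pderiv_at \<alpha> (\<lambda>y. (F y)^2)) x"

definition finsler_norm :: "(real^'n::finite \<Rightarrow> real) \<Rightarrow> bool" where
  "finsler_norm F \<longleftrightarrow>
     (\<forall>x. F x \<ge> 0) \<and>
     smooth_on (- {0}) F \<and>
     isCont F 0 \<and>
     (\<forall>c>0. \<forall>x. F (c *\<^sub>R x) = c * F x) \<and>
     (\<forall>x. x \<noteq> 0 \<longrightarrow> (\<forall>\<xi>. \<xi> \<noteq> 0 \<longrightarrow>
        (\<Sum>\<alpha>\<in>UNIV. \<Sum>\<beta>\<in>UNIV. fund_tensor F x \<alpha> \<beta> * \<xi>$\<alpha> * \<xi>$\<beta>) > 0))"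

definition gbar :: "(real^'n::finite \<Rightarrow> real) \<Rightarrow> real^'n \<Rightarrow> real^'n \<Rightarrow> real" where
  "gbar F v w = (if v = 0 then 0 else
      (\<Sum>\<alpha>\<in>UNIV. \<Sum>\<beta>\<in>UNIV. fund_tensor F v \<alpha> \<beta> * v$\<alpha> * w$\<beta>))"

end

theory Submission imports Defs begin

text \<open>With \<open>a = F v\<close>, \<open>b = F w\<close> and \<open>g = gbar F v w\<close>, the identity
  \<open>(v\<^sub>0 w\<^sub>0 - a b)\<^sup>2 - (v\<^sub>0\<^sup>2 - a\<^sup>2) (w\<^sub>0\<^sup>2 - b\<^sup>2) = (v\<^sub>0 b - a w\<^sub>0)\<^sup>2\<close> and \<open>a b \<le> v\<^sub>0 w\<^sub>0\<close> reduce the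
  theorem to the fundamental inequality \<open>g \<le> a b\<close>. By Euler's identities for the 2-homogeneous
  function \<open>G = F\<^sup>2\<close>, \<open>gbar F v w = dG\<^sub>v(w) / 2\<close> and \<open>gbar F v v = G v\<close>, so \<open>F > 0\<close> away from the
  origin. Rescale \<open>w\<close> to a point \<open>u\<close> with \<open>F u = F v\<close>: along the segment from \<open>v\<close> to \<open>u\<close> the
  function \<open>G\<close> takes equal values at the ends and is strictly convex, its second derivative being
  twice the fundamental tensor; hence \<open>dG\<^sub>v(u - v) \<le> 0\<close>, which is the fundamental inequality.\<close>

lemma linear_eq_sum_axis:
  fixes L :: "real^'n \<Rightarrow> real"
  assumes "linear L"
  shows "L h = (\<Sum>i\<in>UNIV. h$i * L (axis i 1))"
proof -
  have "L h = L (\<Sum>i\<in>UNIV. h$i *s axis i 1)" by (simp add: basis_expansion)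
  also have "\<dots> = (\<Sum>i\<in>UNIV. L (h$i *\<^sub>R axis i 1))"
    by (simp add: linear_sum[OF assms] scalar_mult_eq_scaleR)
  also have "\<dots> = (\<Sum>i\<in>UNIV. h$i * L (axis i 1))"
    using linear_scale[OF assms] by simp
  finally show ?thesis .
qed

lemma frechet_derivative_eq_sum_pderiv:
  fixes f :: "real^'n \<Rightarrow> real"
  assumes "f differentiable at x"
  shows "frechet_derivative f (at x) h = (\<Sum>i\<in>UNIV. h$i * pderiv_at i f x)"
  unfolding pderiv_at_def
  by (rule linear_eq_sum_axis) (use assms frechet_derivative_works has_derivative_linear in blast)

lemma sum_axis_mult: "(\<Sum>i\<in>UNIV. (axis j 1 :: real^'n) $ i * c i) = c j"
proof -
  have "(axis j 1 :: real^'n) $ i * c i = (if i = j then c i else 0)" for i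
    by (simp add: axis_def)
  then show ?thesis by simp
qed

lemma has_field_derivative_along_line:
  fixes f :: "real^'n \<Rightarrow> real"
  assumes "f differentiable at (x + t *\<^sub>R \<xi>)"
  shows "((\<lambda>s. f (x + s *\<^sub>R \<xi>)) has_field_derivative
           frechet_derivative f (at (x + t *\<^sub>R \<xi>)) \<xi>) (at t)"
proof -
  let ?D = "frechet_derivative f (at (x + t *\<^sub>R \<xi>))"
  have fD: "(f has_derivative ?D) (at (x + t *\<^sub>R \<xi>))"
    using assms frechet_derivative_works by blast
  have line: "((\<lambda>s. x + s *\<^sub>R \<xi>) has_derivative (\<lambda>h. h *\<^sub>R \<xi>)) (at t)"
    by (auto intro!: derivative_eq_intros)
  have "(\<lambda>h. ?D (h *\<^sub>R \<xi>)) = (*) (?D \<xi>)"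
    using linear_scale[OF has_derivative_linear[OF fD]] by (auto simp: mult.commute)
  then show ?thesis
    using has_derivative_compose[OF line fD] by (simp add: o_def has_field_derivative_def)
qed

lemma euler_homogeneous:
  fixes f :: "real^'n \<Rightarrow> real"
  assumes hom: "\<And>c. c > 0 \<Longrightarrow> f (c *\<^sub>R x) = c^k * f x" and "f differentiable at x"
  shows "frechet_derivative f (at x) x = real k * f x"
proof -
  have "((\<lambda>s. f (0 + s *\<^sub>R x)) has_field_derivative frechet_derivative f (at x) x) (at 1)"
    using has_field_derivative_along_line[of f 0 1 x] assms(2) by simp
  moreover have "((\<lambda>s. f (0 + s *\<^sub>R x)) has_field_derivative real k * f x) (at 1)"
  proof (rule has_field_derivative_transform_within_open[of "\<lambda>s. s^k * f x" _ _ "{0<..}"])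
    show "((\<lambda>s. s^k * f x) has_field_derivative real k * f x) (at 1)"
      by (auto intro!: derivative_eq_intros)
  qed (use hom in auto)
  ultimately show ?thesis using DERIV_unique by blast
qed

text \<open>Differentiate Euler's identity \<open>\<Sum>\<^sub>\<alpha> x\<^sub>\<alpha> \<partial>\<^sub>\<alpha>f x = k f x\<close>, valid on the open set
  \<open>x \<noteq> 0\<close>, in the direction \<open>e\<^sub>\<beta>\<close>.\<close>

lemma euler_homogeneous_pderiv:
  fixes f :: "real^'n \<Rightarrow> real"
  assumes hom: "\<And>c x. c > 0 \<Longrightarrow> f (c *\<^sub>R x) = c^k * f x"
    and diff: "\<And>x. x \<noteq> 0 \<Longrightarrow> f differentiable at x"
    and diff2: "\<And>\<alpha>. pderiv_at \<alpha> f differentiable at v" and "v \<noteq> 0"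
  shows "(\<Sum>\<alpha>\<in>UNIV. v$\<alpha> * pderiv_at \<beta> (pderiv_at \<alpha> f) v) = (real k - 1) * pderiv_at \<beta> f v"
proof -
  let ?D = "\<lambda>\<alpha>. frechet_derivative (pderiv_at \<alpha> f) (at v)"
  let ?H' = "\<lambda>h. \<Sum>\<alpha>\<in>UNIV. v$\<alpha> * ?D \<alpha> h + h$\<alpha> * pderiv_at \<alpha> f v"
  have component: "((\<lambda>x. x $ \<alpha>) has_derivative (\<lambda>h. h $ \<alpha>)) (at v)" for \<alpha>
    by (rule bounded_linear_imp_has_derivative) auto
  have H: "((\<lambda>x. \<Sum>\<alpha>\<in>UNIV. x$\<alpha> * pderiv_at \<alpha> f x) has_derivative ?H') (at v)"
    using diff2 frechet_derivative_works
    by (intro has_derivative_sum has_derivative_mult component) blast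
  have euler: "(\<Sum>\<alpha>\<in>UNIV. x$\<alpha> * pderiv_at \<alpha> f x) = real k * f x" if "x \<in> - {0}" for x
    using that euler_homogeneous[OF hom diff] frechet_derivative_eq_sum_pderiv[OF diff]
    by (simp add: mult.commute)
  have "((\<lambda>x. real k * f x) has_derivative ?H') (at v)"
    using has_derivative_transform_within_open[OF H _ _ euler] \<open>v \<noteq> 0\<close> by auto
  moreover have "((\<lambda>x. real k * f x) has_derivative (\<lambda>h. real k * frechet_derivative f (at v) h)) (at v)"
    using diff[OF \<open>v \<noteq> 0\<close>] frechet_derivative_works by (intro has_derivative_mult_right) blast
  ultimately have "?H' = (\<lambda>h. real k * frechet_derivative f (at v) h)"
    by (rule has_derivative_unique)
  then have "?H' (axis \<beta> 1) = real k * pderiv_at \<beta> f v"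
    unfolding pderiv_at_def by (rule fun_cong)
  moreover have "?H' (axis \<beta> 1) = (\<Sum>\<alpha>\<in>UNIV. v$\<alpha> * pderiv_at \<beta> (pderiv_at \<alpha> f) v) + pderiv_at \<beta> f v"
    by (simp add: sum.distrib sum_axis_mult pderiv_at_def)
  ultimately show ?thesis by (simp add: algebra_simps)
qed

lemma strictly_convex_equal_ends_deriv_neg:
  fixes \<phi> \<phi>' \<phi>'' :: "real \<Rightarrow> real"
  assumes "\<phi> 1 = \<phi> 0"
    and "\<And>t. 0 \<le> t \<Longrightarrow> t \<le> 1 \<Longrightarrow> (\<phi> has_real_derivative \<phi>' t) (at t)"
    and "\<And>t. 0 \<le> t \<Longrightarrow> t \<le> 1 \<Longrightarrow> (\<phi>' has_real_derivative \<phi>'' t) (at t)"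
    and "\<And>t. 0 \<le> t \<Longrightarrow> t \<le> 1 \<Longrightarrow> \<phi>'' t > 0"
  shows "\<phi>' 0 < 0"
proof -
  obtain z where z: "0 < z" "z < 1" "\<phi> 1 - \<phi> 0 = (1 - 0) * \<phi>' z"
    using MVT2[of 0 1 \<phi> \<phi>'] assms(2) by auto
  obtain d where d: "0 < d" "d < z" "\<phi>' z - \<phi>' 0 = (z - 0) * \<phi>'' d"
    using MVT2[of 0 z \<phi>' \<phi>''] assms(3) z by auto
  have "(z - 0) * \<phi>'' d > 0" using assms(4)[of d] d z by simp
  then show ?thesis using z d assms(1) by simp
qed

lemma finsler_norm_nonneg: "finsler_norm F \<Longrightarrow> F x \<ge> 0"
  unfolding finsler_norm_def by blast

lemma finsler_norm_homogeneous: "finsler_norm F \<Longrightarrow> c > 0 \<Longrightarrow> F (c *\<^sub>R x) = c * F x"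
  unfolding finsler_norm_def by blast

lemma finsler_norm_sq_homogeneous: "finsler_norm F \<Longrightarrow> c > 0 \<Longrightarrow> (F (c *\<^sub>R x))^2 = c^2 * (F x)^2"
  by (simp add: finsler_norm_homogeneous power_mult_distrib)

definition fund_form :: "(real^'n::finite \<Rightarrow> real) \<Rightarrow> real^'n \<Rightarrow> real^'n \<Rightarrow> real" where
  "fund_form F x \<xi> = (\<Sum>\<alpha>\<in>UNIV. \<Sum>\<beta>\<in>UNIV. fund_tensor F x \<alpha> \<beta> * \<xi>$\<alpha> * \<xi>$\<beta>)"

lemma fund_form_pos: "finsler_norm F \<Longrightarrow> x \<noteq> 0 \<Longrightarrow> \<xi> \<noteq> 0 \<Longrightarrow> fund_form F x \<xi> > 0"
  unfolding finsler_norm_def fund_form_def by blast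

lemma gbar_self_eq_fund_form: "x \<noteq> 0 \<Longrightarrow> gbar F x x = fund_form F x x"
  unfolding gbar_def fund_form_def by simp

lemma finsler_norm_differentiable:
  assumes "finsler_norm F" "x \<noteq> 0"
  shows "F differentiable at x" "pderiv_at i F differentiable at x"
proof -
  have "Ck_on 2 (- {0}) F" using assms(1) unfolding finsler_norm_def smooth_on_def by blast
  then show "F differentiable at x" "pderiv_at i F differentiable at x"
    using assms(2) by (auto simp: numeral_2_eq_2)
qed

lemma finsler_norm_sq_differentiable:
  assumes "finsler_norm F" "x \<noteq> 0"
  shows "(\<lambda>y. (F y)^2) differentiable at x" "pderiv_at i (\<lambda>y. (F y)^2) differentiable at x"
proof -
  show "(\<lambda>y. (F y)^2) differentiable at x"
    using finsler_norm_differentiable(1)[OF assms] by (simp add: power2_eq_square)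
  have pderiv_sq: "pderiv_at i (\<lambda>y. (F y)^2) y = 2 * pderiv_at i F y * F y" if "y \<noteq> 0" for y
  proof -
    have "(F has_derivative frechet_derivative F (at y)) (at y)"
      using finsler_norm_differentiable(1)[OF assms(1) that] frechet_derivative_works by blast
    then have "((\<lambda>y. (F y)^2) has_derivative (\<lambda>h. 2 * frechet_derivative F (at y) h * F y)) (at y)"
      using has_derivative_power[of F _ y UNIV 2] by simp
    from frechet_derivative_at[OF this] show ?thesis
      unfolding pderiv_at_def by (simp add: fun_eq_iff)
  qed
  have "(\<lambda>y. 2 * pderiv_at i F y * F y) differentiable at x"
    using finsler_norm_differentiable[OF assms] by (intro differentiable_mult differentiable_const) auto
  then obtain D where "((\<lambda>y. 2 * pderiv_at i F y * F y) has_derivative D) (at x)"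
    unfolding differentiable_def by blast
  then have "(pderiv_at i (\<lambda>y. (F y)^2) has_derivative D) (at x)"
    by (rule has_derivative_transform_within_open[where s = "- {0}"]) (use assms pderiv_sq in auto)
  then show "pderiv_at i (\<lambda>y. (F y)^2) differentiable at x"
    unfolding differentiable_def by blast
qed

lemma finsler_norm_sq_euler:
  assumes "finsler_norm F" "v \<noteq> 0"
  shows "frechet_derivative (\<lambda>y. (F y)^2) (at v) v = 2 * (F v)^2"
  using euler_homogeneous[of "\<lambda>y. (F y)^2" v 2] finsler_norm_sq_homogeneous[OF assms(1)]
    finsler_norm_sq_differentiable(1)[OF assms] by simp

lemma gbar_eq_frechet_derivative:
  assumes "finsler_norm F" "v \<noteq> 0"
  shows "gbar F v w = frechet_derivative (\<lambda>y. (F y)^2) (at v) w / 2"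
proof -
  let ?G = "\<lambda>y. (F y)^2"
  have "(\<Sum>\<alpha>\<in>UNIV. v$\<alpha> * pderiv_at \<beta> (pderiv_at \<alpha> ?G) v) = (real 2 - 1) * pderiv_at \<beta> ?G v" for \<beta>
    by (rule euler_homogeneous_pderiv)
       (use finsler_norm_sq_homogeneous[OF assms(1)] finsler_norm_sq_differentiable[OF assms(1)] assms(2) in auto)
  then have euler2: "(\<Sum>\<alpha>\<in>UNIV. v$\<alpha> * pderiv_at \<beta> (pderiv_at \<alpha> ?G) v) = pderiv_at \<beta> ?G v" for \<beta>
    by simp
  have "gbar F v w = (\<Sum>\<alpha>\<in>UNIV. \<Sum>\<beta>\<in>UNIV. (1/2) * w$\<beta> * (v$\<alpha> * pderiv_at \<beta> (pderiv_at \<alpha> ?G) v))"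
    unfolding gbar_def fund_tensor_def using assms(2) by (simp add: algebra_simps)
  also have "\<dots> = (\<Sum>\<beta>\<in>UNIV. (1/2) * w$\<beta> * (\<Sum>\<alpha>\<in>UNIV. v$\<alpha> * pderiv_at \<beta> (pderiv_at \<alpha> ?G) v))"
    by (subst sum.swap) (simp add: sum_distrib_left)
  also have "\<dots> = (\<Sum>\<beta>\<in>UNIV. (1/2) * w$\<beta> * pderiv_at \<beta> ?G v)"
    by (simp add: euler2)
  also have "\<dots> = frechet_derivative ?G (at v) w / 2"
    using frechet_derivative_eq_sum_pderiv[OF finsler_norm_sq_differentiable(1)[OF assms], of w]
    by (simp add: sum_divide_distrib)
  finally show ?thesis .
qed

lemma gbar_self: "finsler_norm F \<Longrightarrow> v \<noteq> 0 \<Longrightarrow> gbar F v v = (F v)^2"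
  by (simp add: gbar_eq_frechet_derivative finsler_norm_sq_euler)

lemma finsler_norm_pos:
  assumes "finsler_norm F" "x \<noteq> 0"
  shows "F x > 0"
proof -
  have "(F x)^2 > 0"
    using gbar_self[OF assms] gbar_self_eq_fund_form[OF assms(2)] fund_form_pos[OF assms assms(2)]
    by simp
  then show ?thesis using finsler_norm_nonneg[OF assms(1), of x] by (simp add: less_le)
qed

lemma finsler_norm_sq_line_deriv:
  assumes "finsler_norm F" "x + t *\<^sub>R \<xi> \<noteq> 0"
  shows "((\<lambda>s. (F (x + s *\<^sub>R \<xi>))^2) has_real_derivative
           (\<Sum>\<alpha>\<in>UNIV. \<xi>$\<alpha> * pderiv_at \<alpha> (\<lambda>y. (F y)^2) (x + t *\<^sub>R \<xi>))) (at t)"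
  using has_field_derivative_along_line[OF finsler_norm_sq_differentiable(1)[OF assms]]
    frechet_derivative_eq_sum_pderiv[OF finsler_norm_sq_differentiable(1)[OF assms]]
  by simp

lemma finsler_norm_sq_line_deriv2:
  assumes "finsler_norm F" "x + t *\<^sub>R \<xi> \<noteq> 0"
  shows "((\<lambda>s. \<Sum>\<alpha>\<in>UNIV. \<xi>$\<alpha> * pderiv_at \<alpha> (\<lambda>y. (F y)^2) (x + s *\<^sub>R \<xi>)) has_real_derivative
           2 * fund_form F (x + t *\<^sub>R \<xi>) \<xi>) (at t)"
proof -
  let ?G = "\<lambda>y. (F y)^2"
  let ?y = "x + t *\<^sub>R \<xi>"
  have "((\<lambda>s. \<Sum>\<alpha>\<in>UNIV. \<xi>$\<alpha> * pderiv_at \<alpha> ?G (x + s *\<^sub>R \<xi>)) has_real_derivative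
           (\<Sum>\<alpha>\<in>UNIV. \<xi>$\<alpha> * (\<Sum>\<beta>\<in>UNIV. \<xi>$\<beta> * pderiv_at \<beta> (pderiv_at \<alpha> ?G) ?y))) (at t)"
  proof (intro DERIV_sum DERIV_cmult)
    fix \<alpha>
    note d = finsler_norm_sq_differentiable(2)[OF assms, of \<alpha>]
    show "((\<lambda>s. pderiv_at \<alpha> ?G (x + s *\<^sub>R \<xi>)) has_real_derivative
           (\<Sum>\<beta>\<in>UNIV. \<xi>$\<beta> * pderiv_at \<beta> (pderiv_at \<alpha> ?G) ?y)) (at t)"
      using has_field_derivative_along_line[OF d] frechet_derivative_eq_sum_pderiv[OF d] by simp
  qed
  then show ?thesis
    unfolding fund_form_def fund_tensor_def by (simp add: sum_distrib_left algebra_simps)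
qed

text \<open>Along the segment from \<open>v\<close> to \<open>u\<close>, \<open>F\<^sup>2\<close> is strictly convex by positivity of the fundamental
  tensor, so it starts out decreasing. If the segment meets the origin, \<open>u - v\<close> is a negative
  multiple of \<open>v\<close> and Euler's identity applies instead.\<close>

lemma finsler_norm_sq_deriv_toward_sphere_nonpos:
  assumes "finsler_norm F" "v \<noteq> 0" "F u = F v"
  shows "frechet_derivative (\<lambda>y. (F y)^2) (at v) (u - v) \<le> 0"
proof -
  let ?G = "\<lambda>y. (F y)^2"
  let ?D = "frechet_derivative ?G (at v)"
  have lin: "linear ?D"
    using finsler_norm_sq_differentiable(1)[OF assms(1,2)] frechet_derivative_works has_derivative_linear
    by blast
  consider (through_origin) t where "0 \<le> t" "t \<le> 1" "v + t *\<^sub>R (u - v) = 0"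
    | (avoids_origin) "\<And>t. 0 \<le> t \<Longrightarrow> t \<le> 1 \<Longrightarrow> v + t *\<^sub>R (u - v) \<noteq> 0"
    by blast
  then show ?thesis
  proof cases
    case through_origin
    then have "t > 0" using assms(2) by (cases "t = 0") auto
    have "t *\<^sub>R (u - v) = - v"
      using through_origin(3) by (metis add.commute eq_neg_iff_add_eq_0)
    then have "t * ?D (u - v) = - ?D v"
      using linear_scale[OF lin, of t "u - v"] linear_neg[OF lin, of v] by simp
    also have "\<dots> \<le> 0" using finsler_norm_sq_euler[OF assms(1,2)] by simp
    finally show ?thesis using \<open>t > 0\<close> by (simp add: mult_le_0_iff)
  next
    case avoids_origin
    show ?thesis
    proof (cases "u = v")
      case True
      then show ?thesis using linear_0[OF lin] by simp
    next
      case False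
      let ?\<phi>' = "\<lambda>s. \<Sum>\<alpha>\<in>UNIV. (u - v)$\<alpha> * pderiv_at \<alpha> ?G (v + s *\<^sub>R (u - v))"
      have "?\<phi>' 0 < 0"
      proof (rule strictly_convex_equal_ends_deriv_neg[where \<phi> = "\<lambda>s. ?G (v + s *\<^sub>R (u - v))"
            and \<phi>'' = "\<lambda>s. 2 * fund_form F (v + s *\<^sub>R (u - v)) (u - v)"])
        show "?G (v + 1 *\<^sub>R (u - v)) = ?G (v + 0 *\<^sub>R (u - v))" using assms(3) by simp
      next
        fix s :: real assume "0 \<le> s" "s \<le> 1"
        then have on_segment: "v + s *\<^sub>R (u - v) \<noteq> 0" by (rule avoids_origin)
        show "((\<lambda>s. ?G (v + s *\<^sub>R (u - v))) has_real_derivative ?\<phi>' s) (at s)"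
          by (rule finsler_norm_sq_line_deriv[OF assms(1) on_segment])
        show "(?\<phi>' has_real_derivative 2 * fund_form F (v + s *\<^sub>R (u - v)) (u - v)) (at s)"
          by (rule finsler_norm_sq_line_deriv2[OF assms(1) on_segment])
        show "2 * fund_form F (v + s *\<^sub>R (u - v)) (u - v) > 0"
          using fund_form_pos[OF assms(1) on_segment] False by simp
      qed
      then show ?thesis
        using frechet_derivative_eq_sum_pderiv[OF finsler_norm_sq_differentiable(1)[OF assms(1,2)]]
        by simp
    qed
  qed
qed

text \<open>Rescale \<open>w\<close> onto the sphere through \<open>v\<close>.\<close>

lemma finsler_norm_sq_deriv_le:
  assumes "finsler_norm F" "v \<noteq> 0"
  shows "frechet_derivative (\<lambda>y. (F y)^2) (at v) w \<le> 2 * F v * F w"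
proof -
  let ?D = "frechet_derivative (\<lambda>y. (F y)^2) (at v)"
  have lin: "linear ?D"
    using finsler_norm_sq_differentiable(1)[OF assms] frechet_derivative_works has_derivative_linear
    by blast
  have Fv: "F v > 0" by (rule finsler_norm_pos[OF assms])
  show ?thesis
  proof (cases "w = 0")
    case True
    then show ?thesis using linear_0[OF lin] Fv finsler_norm_nonneg[OF assms(1), of 0] by simp
  next
    case False
    then have Fw: "F w > 0" by (rule finsler_norm_pos[OF assms(1)])
    define c where "c = F v / F w"
    have "c > 0" using Fv Fw by (simp add: c_def)
    then have "F (c *\<^sub>R w) = F v"
      using Fw finsler_norm_homogeneous[OF assms(1)] by (simp add: c_def)
    then have "?D (c *\<^sub>R w - v) \<le> 0"
      by (rule finsler_norm_sq_deriv_toward_sphere_nonpos[OF assms])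
    moreover have "?D (c *\<^sub>R w - v) = c * ?D w - 2 * (F v)^2"
      using linear_diff[OF lin] linear_scale[OF lin] finsler_norm_sq_euler[OF assms] by simp
    ultimately have "c * ?D w \<le> 2 * (F v)^2" by linarith
    have "F v * ?D w = F w * (c * ?D w)" using Fw by (simp add: c_def)
    also have "\<dots> \<le> F w * (2 * (F v)^2)"
      using mult_left_mono[OF \<open>c * ?D w \<le> 2 * (F v)^2\<close>] Fw by simp
    also have "\<dots> = F v * (2 * F v * F w)" by (simp add: power2_eq_square)
    finally show ?thesis using Fv by simp
  qed
qed

lemma gbar_le_norm_mult:
  assumes "finsler_norm F"
  shows "gbar F v w \<le> F v * F w"
proof (cases "v = 0")
  case True
  then show ?thesis using finsler_norm_nonneg[OF assms] by (simp add: gbar_def)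
next
  case False
  then show ?thesis
    using gbar_eq_frechet_derivative[OF assms False, of w] finsler_norm_sq_deriv_le[OF assms False, of w]
    by linarith
qed

lemma reverse_cauchy_schwarz_timelike:
  fixes a b g v0 w0 :: real
  assumes "0 \<le> a" "a \<le> v0" "0 \<le> b" "b \<le> w0" "g \<le> a * b"
  shows "(v0 * w0 - g)^2 - (v0^2 - a^2) * (w0^2 - b^2) \<ge> 0"
proof -
  have "a * b \<le> v0 * w0" using assms by (intro mult_mono) auto
  then have "(v0 * w0 - a * b)^2 \<le> (v0 * w0 - g)^2"
    using assms(5) by (intro power_mono) auto
  moreover have "(v0 * w0 - a * b)^2 - (v0^2 - a^2) * (w0^2 - b^2) = (v0 * b - a * w0)^2"
    by (simp add: power2_eq_square algebra_simps)
  moreover have "(v0 * b - a * w0)^2 \<ge> 0" by simp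
  ultimately show ?thesis by linarith
qed

theorem mainTheorem11:
  fixes F :: "real^'n \<Rightarrow> real" and v w :: "real^'n" and v0 w0 :: real
  assumes "finsler_norm F"
    and "v0 > 0" and "w0 > 0"
    and "v0^2 - (F v)^2 > 0" and "w0^2 - (F w)^2 > 0"
  shows "(v0 * w0 - gbar F v w)^2 - (v0^2 - (F v)^2) * (w0^2 - (F w)^2) \<ge> 0"
proof (rule reverse_cauchy_schwarz_timelike)
  show "0 \<le> F v" "0 \<le> F w" using finsler_norm_nonneg[OF assms(1)] by auto
  show "F v \<le> v0" by (rule power2_le_imp_le) (use assms(2,4) in linarith)+
  show "F w \<le> w0" by (rule power2_le_imp_le) (use assms(3,5) in linarith)+
  show "gbar F v w \<le> F v * F w" by (rule gbar_le_norm_mult[OF assms(1)])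
qed

end
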